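(* Let $\Theta=\{\theta\in\mathbb{R}^p:\|\theta\|_0\le k\}$ with $k<p/2$, and for $\theta^*\in\Theta$ let $P_{\theta^*}=\mathcal{N}(\theta^*,I_p)$; consider data $X_1,\dots,X_n\stackrel{i.i.d.}{\sim}P$ where $W(P,P_{\theta^*})\le\epsilon$. There exist constants $C,c>0$ such that $$\inf_{\widehat\theta}\sup_{\theta^*\in\Theta,\;P:W(P_{\theta^*},P)\le\epsilon}\mathbb{P}\left(\|\theta^*-\widehat\theta\|_2\ge C\left(\sqrt{\frac{k\log\frac pk}{n}}\vee\epsilon\right)\right)\ge c,$$ the infimum being over all estimators based on $X_1,\dots,X_n$.
   Context: $W$ is the Wasserstein-1 distance $W(P,Q)=\inf_\Pi\mathbb{E}_\Pi\|X-Y\|_2$ over couplings. $a\vee b=\max(a,b)$. *)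

theory Defs
  imports "HOL-Probability.Probability"
begin

definition Rp :: "nat \<Rightarrow> (nat \<Rightarrow> real) measure" where
  "Rp p = PiM {..<p} (\<lambda>_. borel)"

definition l2dist :: "nat \<Rightarrow> (nat \<Rightarrow> real) \<Rightarrow> (nat \<Rightarrow> real) \<Rightarrow> real" where
  "l2dist p x y = sqrt (\<Sum>i<p. (x i - y i)\<^sup>2)"

definition gauss :: "nat \<Rightarrow> (nat \<Rightarrow> real) \<Rightarrow> (nat \<Rightarrow> real) measure" where
  "gauss p \<theta> = PiM {..<p} (\<lambda>i. density lborel (normal_density (\<theta> i) 1))"

definition couplings :: "'a measure \<Rightarrow> 'a measure \<Rightarrow> ('a \<times> 'a) measure set" where
  "couplings P Q = {M. sets M = sets (P \<Otimes>\<^sub>M Q) \<and> prob_space M \<and>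
       distr M P fst = P \<and> distr M Q snd = Q}"

definition W1 :: "nat \<Rightarrow> (nat \<Rightarrow> real) measure \<Rightarrow> (nat \<Rightarrow> real) measure \<Rightarrow> ennreal" where
  "W1 p P Q = (INF M \<in> couplings P Q. \<integral>\<^sup>+ z. ennreal (l2dist p (fst z) (snd z)) \<partial>M)"

definition sparse_vecs :: "nat \<Rightarrow> nat \<Rightarrow> (nat \<Rightarrow> real) set" where
  "sparse_vecs p k = {\<theta> \<in> space (Rp p). card {i \<in> {..<p}. \<theta> i \<noteq> 0} \<le> k}"

definition sample :: "nat \<Rightarrow> (nat \<Rightarrow> real) measure \<Rightarrow> (nat \<Rightarrow> nat \<Rightarrow> real) measure" where
  "sample n P = PiM {..<n} (\<lambda>_. P)"

definition estimators :: "nat \<Rightarrow> nat \<Rightarrow> ((nat \<Rightarrow> nat \<Rightarrow> real) \<Rightarrow> (nat \<Rightarrow> real)) set" where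
  "estimators p n = PiM {..<n} (\<lambda>_. Rp p) \<rightarrow>\<^sub>M Rp p"

definition adversary :: "nat \<Rightarrow> nat \<Rightarrow> real \<Rightarrow> ((nat \<Rightarrow> real) \<times> (nat \<Rightarrow> real) measure) set" where
  "adversary p k \<epsilon> = {(\<theta>, P). \<theta> \<in> sparse_vecs p k \<and> prob_space P \<and> sets P = sets (Rp p) \<and>
       W1 p (gauss p \<theta>) P \<le> ennreal \<epsilon>}"

end

theory Submission
  imports Defs
begin

text \<open>
  The two terms of the rate come from two separate constructions.

  Contamination: the Gaussians centred at \<open>0\<close> and at \<open>\<epsilon> e\<^sub>0\<close> are within
  Wasserstein distance \<open>\<epsilon>\<close> (translation coupling), so the adversary may present the same
  sample law for both parameters, and no estimate is within \<open>\<epsilon>/2\<close> of both.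

  Sparsity: split \<open>k m\<close> coordinates, \<open>m = \<lfloor>p/k\<rfloor>\<close>, into \<open>k\<close> blocks of size \<open>m\<close> and put a
  spike of height \<open>\<delta>\<close> into each block.  This gives \<open>m\<^sup>k\<close> sparse hypotheses whose squared
  distances are \<open>2\<delta>\<^sup>2\<close> times their Hamming distances.  With \<open>\<delta>\<^sup>2 = log m / (8n)\<close> the
  likelihood ratio of each sample law against \<open>N(0,I)\<^sup>n\<close> has second moment \<open>E = m\<^bsup>k/8\<^esup>\<close>,
  and a ball of radius \<open>r = \<delta>\<surd>k / 4\<close> around any estimate contains at most
  \<open>N = m\<^bsup>k/8\<^esup> (2 - 1/m)\<^sup>k\<close> hypotheses.  By AM-GM, \<open>P\<^sub>s(B) \<le> 1/2 + E Q(B) / 2\<close> for every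
  event \<open>B\<close>, so averaging over \<open>s\<close> yields a hypothesis whose ball is missed with probability
  at least \<open>1/2 - N E / (2 m\<^sup>k) \<ge> 1/25\<close>.
\<close>

section \<open>Finite products of probability measures\<close>

lemma measurable_PiM_component_comp:
  assumes "i \<in> I" "f \<in> M i \<rightarrow>\<^sub>M N"
  shows "(\<lambda>x. f (x i)) \<in> PiM I M \<rightarrow>\<^sub>M N"
  using measurable_compose[OF measurable_component_singleton[OF assms(1), of M] assms(2)] .

text \<open>
  Both proofs replace the factors outside \<open>I\<close> by Dirac measures, so that the uniqueness
  theorem of \<^locale>\<open>product_prob_space\<close> applies.
\<close>

lemma PiM_density:
  assumes fin: "finite I"
    and M: "\<And>i. i \<in> I \<Longrightarrow> prob_space (M i)"
    and D: "\<And>i. i \<in> I \<Longrightarrow> prob_space (density (M i) (f i))"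
    and f[measurable]: "\<And>i. i \<in> I \<Longrightarrow> f i \<in> borel_measurable (M i)"
  shows "PiM I (\<lambda>i. density (M i) (f i)) = density (PiM I M) (\<lambda>x. \<Prod>i\<in>I. f i (x i))"
proof -
  define M' where "M' = (\<lambda>i. if i \<in> I then M i else return (count_space UNIV) undefined)"
  define N' where "N' = (\<lambda>i. if i \<in> I then density (M i) (f i) else return (count_space UNIV) undefined)"
  have [simp]: "PiM I M' = PiM I M" "PiM I N' = PiM I (\<lambda>i. density (M i) (f i))"
    by (intro PiM_cong; simp add: M'_def N'_def)+
  interpret Mp: product_prob_space M'
    by (rule product_prob_spaceI) (auto simp: M'_def intro!: prob_space_return M)
  interpret Np: product_prob_space N'
    by (rule product_prob_spaceI) (auto simp: N'_def intro!: prob_space_return D)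
  have "density (PiM I M') (\<lambda>x. \<Prod>i\<in>I. f i (x i)) = PiM I N'"
  proof (rule Np.PiM_eqI[OF fin])
    show "sets (density (PiM I M') (\<lambda>x. \<Prod>i\<in>I. f i (x i))) = sets (PiM I N')"
      by (auto intro!: sets_PiM_cong simp: M'_def N'_def)
  next
    fix A assume A: "\<And>i. i \<in> I \<Longrightarrow> A i \<in> sets (N' i)"
    then have A': "\<And>i. i \<in> I \<Longrightarrow> A i \<in> sets (M i)" by (auto simp: N'_def)
    have fm: "(\<lambda>x. \<Prod>i\<in>I. f i (x i)) \<in> borel_measurable (PiM I M')"
      unfolding \<open>PiM I M' = PiM I M\<close>
      by (rule borel_measurable_prod_ennreal, rule measurable_PiM_component_comp, auto)
    have "emeasure (density (PiM I M') (\<lambda>x. \<Prod>i\<in>I. f i (x i))) (Pi\<^sub>E I A)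
        = (\<integral>\<^sup>+ x. (\<Prod>i\<in>I. f i (x i)) * indicator (Pi\<^sub>E I A) x \<partial>PiM I M')"
      using A' by (intro emeasure_density[OF fm]) (auto simp: M'_def intro!: sets_PiM_I_finite fin)
    also have "\<dots> = (\<integral>\<^sup>+ x. (\<Prod>i\<in>I. f i (x i) * indicator (A i) (x i)) \<partial>PiM I M')"
      using fin by (intro nn_integral_cong)
        (auto simp: space_PiM prod.distrib indicator_def PiE_def Pi_def extensional_def)
    also have "\<dots> = (\<Prod>i\<in>I. \<integral>\<^sup>+ y. f i y * indicator (A i) y \<partial>M' i)"
      using A' by (intro Mp.product_nn_integral_prod[OF fin]) (auto simp: M'_def)
    also have "\<dots> = (\<Prod>i\<in>I. emeasure (N' i) (A i))"
      using A' by (intro prod.cong) (auto simp: M'_def N'_def emeasure_density)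
    finally show "emeasure (density (PiM I M') (\<lambda>x. \<Prod>i\<in>I. f i (x i))) (Pi\<^sub>E I A)
        = (\<Prod>i\<in>I. emeasure (N' i) (A i))" .
  qed
  then show ?thesis by simp
qed

lemma distr_PiM_componentwise:
  assumes fin: "finite I"
    and M: "\<And>i. i \<in> I \<Longrightarrow> prob_space (M i)"
    and M': "\<And>i. i \<in> I \<Longrightarrow> prob_space (M' i)"
    and f[measurable]: "\<And>i. i \<in> I \<Longrightarrow> f i \<in> M i \<rightarrow>\<^sub>M M' i"
  shows "distr (PiM I M) (PiM I M') (\<lambda>x. \<lambda>i\<in>I. f i (x i)) = PiM I (\<lambda>i. distr (M i) (M' i) (f i))"
proof -
  define N where "N = (\<lambda>i. if i \<in> I then M i else return (count_space UNIV) undefined)"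
  define N' where "N' = (\<lambda>i. if i \<in> I then M' i else return (count_space UNIV) undefined)"
  define D where "D = (\<lambda>i. if i \<in> I then distr (M i) (M' i) (f i) else return (count_space UNIV) undefined)"
  have [simp]: "PiM I N = PiM I M" "PiM I N' = PiM I M'" "PiM I D = PiM I (\<lambda>i. distr (M i) (M' i) (f i))"
    by (intro PiM_cong; simp add: N_def N'_def D_def)+
  interpret Np: product_prob_space N
    by (rule product_prob_spaceI) (auto simp: N_def intro!: prob_space_return M)
  interpret Dp: product_prob_space D
    by (rule product_prob_spaceI) (auto simp: D_def intro!: prob_space_return prob_space.prob_space_distr M)
  let ?F = "\<lambda>x. \<lambda>i\<in>I. f i (x i)"
  have "distr (PiM I N) (PiM I N') ?F = PiM I D"
  proof (rule Dp.PiM_eqI[OF fin])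
    show "sets (distr (PiM I N) (PiM I N') ?F) = sets (PiM I D)"
      by (auto intro!: sets_PiM_cong simp: N'_def D_def)
  next
    fix A assume A: "\<And>i. i \<in> I \<Longrightarrow> A i \<in> sets (D i)"
    then have A': "\<And>i. i \<in> I \<Longrightarrow> A i \<in> sets (M' i)" by (auto simp: D_def)
    have Fm: "?F \<in> PiM I N \<rightarrow>\<^sub>M PiM I N'"
      unfolding \<open>PiM I N = PiM I M\<close> \<open>PiM I N' = PiM I M'\<close>
      by (rule measurable_restrict, rule measurable_PiM_component_comp, auto)
    have "emeasure (distr (PiM I N) (PiM I N') ?F) (Pi\<^sub>E I A)
       = emeasure (PiM I N) (?F -` Pi\<^sub>E I A \<inter> space (PiM I N))"
      using A' by (intro emeasure_distr[OF Fm]) (auto simp: N'_def intro!: sets_PiM_I_finite fin)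
    also have "?F -` Pi\<^sub>E I A \<inter> space (PiM I N) = Pi\<^sub>E I (\<lambda>i. f i -` A i \<inter> space (M i))"
      by (auto simp: space_PiM PiE_def Pi_def extensional_def N_def)
    also have "emeasure (PiM I N) (Pi\<^sub>E I (\<lambda>i. f i -` A i \<inter> space (M i)))
        = (\<Prod>i\<in>I. emeasure (N i) (f i -` A i \<inter> space (M i)))"
      using A' by (intro Np.emeasure_PiM[OF fin]) (auto simp: N_def)
    also have "\<dots> = (\<Prod>i\<in>I. emeasure (D i) (A i))"
      using A' by (intro prod.cong) (auto simp: N_def D_def emeasure_distr)
    finally show "emeasure (distr (PiM I N) (PiM I N') ?F) (Pi\<^sub>E I A) = (\<Prod>i\<in>I. emeasure (D i) (A i))" .
  qed
  then show ?thesis by simp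
qed

section \<open>Gaussian likelihood ratios\<close>

definition normal_lr :: "real \<Rightarrow> real \<Rightarrow> real" where
  "normal_lr t x = exp (t * x - t\<^sup>2 / 2)"

lemma normal_lr_pos: "0 < normal_lr t x"
  by (simp add: normal_lr_def)

lemma borel_measurable_normal_lr[measurable]: "normal_lr t \<in> borel_measurable borel"
  unfolding normal_lr_def by measurable

lemma normal_density_eq_lr: "normal_density t 1 x = normal_density 0 1 x * normal_lr t x"
proof -
  have "exp (-(x - t)\<^sup>2 / 2) = exp (-(x - 0)\<^sup>2 / 2) * exp (t * x - t\<^sup>2 / 2)"
    unfolding exp_add[symmetric] by (rule arg_cong[where f=exp]) (simp add: power2_eq_square field_simps)
  then show ?thesis by (simp add: normal_density_def normal_lr_def)
qed

lemma normal_density_mult_lr_sq: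
  "normal_density 0 1 x * (normal_lr t x)\<^sup>2 = exp (t\<^sup>2) * normal_density (2 * t) 1 x"
proof -
  have "exp (-(x - 0)\<^sup>2 / 2) * (exp (t * x - t\<^sup>2 / 2))\<^sup>2 = exp (t\<^sup>2) * exp (-(x - 2 * t)\<^sup>2 / 2)"
    unfolding power2_eq_square[of "exp _"] exp_add[symmetric]
    by (rule arg_cong[where f=exp]) (simp add: power2_eq_square field_simps)
  then show ?thesis by (simp add: normal_density_def normal_lr_def)
qed

abbreviation std_normal :: "real measure" where
  "std_normal \<equiv> density lborel (\<lambda>x. ennreal (normal_density 0 1 x))"

lemma normal_eq_density_std_normal:
  "density lborel (\<lambda>x. ennreal (normal_density t 1 x)) = density std_normal (\<lambda>x. ennreal (normal_lr t x))"
proof -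
  have "\<And>x. ennreal (normal_density t 1 x) = ennreal (normal_density 0 1 x) * ennreal (normal_lr t x)"
    by (simp add: normal_density_eq_lr[of t] ennreal_mult normal_lr_pos less_imp_le)
  then show ?thesis by (subst density_density_eq) simp_all
qed

lemma nn_integral_normal_lr_sq: "(\<integral>\<^sup>+ y. ennreal ((normal_lr t y)\<^sup>2) \<partial>std_normal) = ennreal (exp (t\<^sup>2))"
proof -
  have "(\<integral>\<^sup>+ y. ennreal ((normal_lr t y)\<^sup>2) \<partial>std_normal)
      = (\<integral>\<^sup>+ y. ennreal (exp (t\<^sup>2)) * ennreal (normal_density (2 * t) 1 y) \<partial>lborel)"
    by (subst nn_integral_density) (simp_all add: ennreal_mult[symmetric] normal_density_mult_lr_sq)
  also have "\<dots> = ennreal (exp (t\<^sup>2)) * emeasure (density lborel (normal_density (2 * t) 1)) UNIV"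
    by (simp add: nn_integral_cmult emeasure_density)
  also have "\<dots> = ennreal (exp (t\<^sup>2))"
    using prob_space.emeasure_space_1[OF prob_space_normal_density[where \<mu>="2 * t" and \<sigma>=1]] by simp
  finally show ?thesis .
qed

lemma normal_translate:
  "distr (density lborel (\<lambda>x. ennreal (normal_density a 1 x))) borel (\<lambda>y. y + b) =
   density lborel (\<lambda>x. ennreal (normal_density (a + b) 1 x))"
proof -
  have "density lborel (\<lambda>x. ennreal (normal_density (a + b) 1 x)) =
        density (distr lborel borel ((+) b)) (\<lambda>x. ennreal (normal_density (a + b) 1 x))"
    by (simp add: lborel_distr_plus)
  also have "\<dots> = distr (density lborel (\<lambda>x. ennreal (normal_density (a + b) 1 (b + x)))) borel ((+) b)"
    by (rule density_distr) auto
  also have "(\<lambda>x. ennreal (normal_density (a + b) 1 (b + x))) = (\<lambda>x. ennreal (normal_density a 1 x))"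
    by (simp add: normal_density_def algebra_simps)
  also have "distr (density lborel (\<lambda>x. ennreal (normal_density a 1 x))) borel ((+) b) =
             distr (density lborel (\<lambda>x. ennreal (normal_density a 1 x))) borel (\<lambda>y. y + b)"
    by (rule distr_cong) (auto simp: add.commute)
  finally show ?thesis ..
qed

lemma sets_gauss[simp]: "sets (gauss p \<theta>) = sets (Rp p)"
  unfolding gauss_def Rp_def by (rule sets_PiM_cong) simp_all

lemma prob_space_gauss: "prob_space (gauss p \<theta>)"
  unfolding gauss_def by (rule prob_space_PiM) (simp add: prob_space_normal_density)

lemma gauss_eq_density:
  "gauss p \<theta> = density (gauss p (\<lambda>_. 0)) (\<lambda>x. ennreal (\<Prod>j<p. normal_lr (\<theta> j) (x j)))"
proof -
  have "gauss p \<theta> = PiM {..<p} (\<lambda>j. density std_normal (\<lambda>x. ennreal (normal_lr (\<theta> j) x)))"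
    unfolding gauss_def by (intro PiM_cong refl normal_eq_density_std_normal)
  also have "\<dots> = density (PiM {..<p} (\<lambda>_. std_normal)) (\<lambda>x. \<Prod>j<p. ennreal (normal_lr (\<theta> j) (x j)))"
    using prob_space_normal_density normal_eq_density_std_normal[symmetric]
    by (intro PiM_density) auto
  also have "\<dots> = density (gauss p (\<lambda>_. 0)) (\<lambda>x. ennreal (\<Prod>j<p. normal_lr (\<theta> j) (x j)))"
    unfolding gauss_def by (simp add: prod_ennreal normal_lr_pos less_imp_le)
  finally show ?thesis .
qed

lemma borel_measurable_prod_normal_lr[measurable]:
  "(\<lambda>x. \<Prod>j<p. normal_lr (\<theta> j) (x j)) \<in> borel_measurable (gauss p \<theta>')"
  unfolding gauss_def by (rule borel_measurable_prod, rule measurable_PiM_component_comp, auto)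

definition sample_lr :: "nat \<Rightarrow> nat \<Rightarrow> (nat \<Rightarrow> real) \<Rightarrow> (nat \<Rightarrow> nat \<Rightarrow> real) \<Rightarrow> real" where
  "sample_lr n p \<theta> xs = (\<Prod>i<n. \<Prod>j<p. normal_lr (\<theta> j) (xs i j))"

lemma sample_lr_nonneg: "0 \<le> sample_lr n p \<theta> xs"
  unfolding sample_lr_def by (auto intro!: prod_nonneg simp: normal_lr_pos less_imp_le)

lemma sets_sample_gauss: "sets (sample n (gauss p \<theta>)) = sets (PiM {..<n} (\<lambda>_. Rp p))"
  unfolding sample_def by (rule sets_PiM_cong) simp_all

lemma space_sample_gauss: "space (sample n (gauss p \<theta>)) = space (PiM {..<n} (\<lambda>_. Rp p))"
  using sets_eq_imp_space_eq[OF sets_sample_gauss] .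

lemma prob_space_sample_gauss: "prob_space (sample n (gauss p \<theta>))"
  unfolding sample_def by (rule prob_space_PiM) (rule prob_space_gauss)

lemma borel_measurable_sample_lr[measurable]: "sample_lr n p \<theta> \<in> borel_measurable (sample n (gauss p \<theta>'))"
  unfolding sample_lr_def sample_def
  by (rule borel_measurable_prod, rule measurable_PiM_component_comp, auto simp: gauss_def)

lemma sample_gauss_eq_density:
  "sample n (gauss p \<theta>) = density (sample n (gauss p (\<lambda>_. 0))) (\<lambda>xs. ennreal (sample_lr n p \<theta> xs))"
proof -
  have "sample n (gauss p \<theta>)
      = PiM {..<n} (\<lambda>_. density (gauss p (\<lambda>_. 0)) (\<lambda>x. ennreal (\<Prod>j<p. normal_lr (\<theta> j) (x j))))"
    unfolding sample_def by (subst gauss_eq_density) simp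
  also have "\<dots> = density (sample n (gauss p (\<lambda>_. 0)))
      (\<lambda>xs. \<Prod>i<n. ennreal (\<Prod>j<p. normal_lr (\<theta> j) (xs i j)))"
    unfolding sample_def using prob_space_gauss gauss_eq_density[symmetric]
    by (intro PiM_density) (auto simp: gauss_def)
  also have "\<dots> = density (sample n (gauss p (\<lambda>_. 0))) (\<lambda>xs. ennreal (sample_lr n p \<theta> xs))"
    unfolding sample_lr_def
    by (subst prod_ennreal) (auto intro!: prod_nonneg simp: normal_lr_pos less_imp_le)
  finally show ?thesis .
qed

lemma nn_integral_sample_lr_sq:
  "(\<integral>\<^sup>+ xs. ennreal ((sample_lr n p \<theta> xs)\<^sup>2) \<partial>sample n (gauss p (\<lambda>_. 0)))
     = ennreal (exp (real n * (\<Sum>j<p. (\<theta> j)\<^sup>2)))"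
proof -
  let ?G = "gauss p (\<lambda>_. 0)"
  interpret S: product_prob_space "\<lambda>_::nat. ?G"
    by (rule product_prob_spaceI) (rule prob_space_gauss)
  interpret T: product_prob_space "\<lambda>_::nat. std_normal"
    by (rule product_prob_spaceI) (simp add: prob_space_normal_density)
  have one_sample:
    "(\<integral>\<^sup>+ x. ennreal ((\<Prod>j<p. normal_lr (\<theta> j) (x j))\<^sup>2) \<partial>?G) = ennreal (exp (\<Sum>j<p. (\<theta> j)\<^sup>2))"
  proof -
    have "(\<integral>\<^sup>+ x. ennreal ((\<Prod>j<p. normal_lr (\<theta> j) (x j))\<^sup>2) \<partial>?G)
        = (\<integral>\<^sup>+ x. (\<Prod>j<p. ennreal ((normal_lr (\<theta> j) (x j))\<^sup>2)) \<partial>PiM {..<p} (\<lambda>_. std_normal))"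
      unfolding gauss_def
      by (auto simp: prod_ennreal power_mult_distrib prod_power_distrib intro!: nn_integral_cong)
    also have "\<dots> = (\<Prod>j<p. \<integral>\<^sup>+ y. ennreal ((normal_lr (\<theta> j) y)\<^sup>2) \<partial>std_normal)"
      by (rule T.product_nn_integral_prod) auto
    also have "\<dots> = ennreal (exp (\<Sum>j<p. (\<theta> j)\<^sup>2))"
      by (simp add: nn_integral_normal_lr_sq prod_ennreal exp_sum)
    finally show ?thesis .
  qed
  have "(\<integral>\<^sup>+ xs. ennreal ((sample_lr n p \<theta> xs)\<^sup>2) \<partial>sample n ?G)
      = (\<integral>\<^sup>+ xs. (\<Prod>i<n. ennreal ((\<Prod>j<p. normal_lr (\<theta> j) (xs i j))\<^sup>2)) \<partial>PiM {..<n} (\<lambda>_. ?G))"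
    unfolding sample_def sample_lr_def
    by (auto simp: prod_ennreal prod_power_distrib[symmetric] intro!: nn_integral_cong)
  also have "\<dots> = (\<Prod>i<n. \<integral>\<^sup>+ x. ennreal ((\<Prod>j<p. normal_lr (\<theta> j) (x j))\<^sup>2) \<partial>?G)"
    by (rule S.product_nn_integral_prod) auto
  also have "\<dots> = ennreal (exp (real n * (\<Sum>j<p. (\<theta> j)\<^sup>2)))"
    by (simp add: one_sample ennreal_power exp_of_nat_mult)
  finally show ?thesis .
qed

section \<open>Wasserstein distance between Gaussians\<close>

lemma l2dist_commute: "l2dist p x y = l2dist p y x"
  unfolding l2dist_def by (simp add: power2_commute)

lemma l2dist_triangle: "l2dist p x y \<le> l2dist p x z + l2dist p z y"
proof -
  have "l2dist p x y = L2_set (\<lambda>i. (x i - z i) + (z i - y i)) {..<p}"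
    unfolding l2dist_def L2_set_def by simp
  also have "\<dots> \<le> L2_set (\<lambda>i. x i - z i) {..<p} + L2_set (\<lambda>i. z i - y i) {..<p}"
    by (rule L2_set_triangle_ineq)
  also have "\<dots> = l2dist p x z + l2dist p z y"
    unfolding l2dist_def L2_set_def by simp
  finally show ?thesis .
qed

lemma l2dist_nonneg: "0 \<le> l2dist p x y"
  unfolding l2dist_def by (simp add: sum_nonneg)

lemma borel_measurable_l2dist[measurable]: "l2dist p \<theta> \<in> borel_measurable (Rp p)"
  unfolding l2dist_def Rp_def by measurable

lemma borel_measurable_l2dist_pair[measurable]:
  "(\<lambda>z. l2dist p (fst z) (snd z)) \<in> borel_measurable (Rp p \<Otimes>\<^sub>M Rp p)"
  unfolding l2dist_def Rp_def by measurable

definition translate :: "nat \<Rightarrow> (nat \<Rightarrow> real) \<Rightarrow> (nat \<Rightarrow> real) \<Rightarrow> (nat \<Rightarrow> real)" where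
  "translate p v x = (\<lambda>i\<in>{..<p}. x i + v i)"

lemma measurable_translate: "translate p v \<in> Rp p \<rightarrow>\<^sub>M Rp p"
  unfolding translate_def Rp_def
  by (rule measurable_restrict, rule measurable_PiM_component_comp, auto)

lemma l2dist_translate: "l2dist p x (translate p (\<lambda>i. \<theta>' i - \<theta> i) x) = l2dist p \<theta> \<theta>'"
  unfolding l2dist_def translate_def by (auto intro!: sum.cong simp: power2_commute)

lemma gauss_translate: "distr (gauss p \<theta>) (gauss p \<theta>') (translate p (\<lambda>i. \<theta>' i - \<theta> i)) = gauss p \<theta>'"
proof -
  have "distr (gauss p \<theta>) (gauss p \<theta>') (translate p (\<lambda>i. \<theta>' i - \<theta> i)) =
    PiM {..<p} (\<lambda>i. distr (density lborel (\<lambda>x. ennreal (normal_density (\<theta> i) 1 x)))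
                      (density lborel (\<lambda>x. ennreal (normal_density (\<theta>' i) 1 x))) (\<lambda>y. y + (\<theta>' i - \<theta> i)))"
    unfolding gauss_def translate_def
    by (rule distr_PiM_componentwise) (auto simp: prob_space_normal_density)
  also have "\<dots> = gauss p \<theta>'"
  proof -
    have "distr (density lborel (\<lambda>x. ennreal (normal_density a 1 x)))
          (density lborel (\<lambda>x. ennreal (normal_density a' 1 x))) (\<lambda>y. y + (a' - a))
        = density lborel (\<lambda>x. ennreal (normal_density a' 1 x))" for a a'
      using normal_translate[of a "a' - a"] by (subst distr_cong[where L=borel, OF refl]) simp_all
    then show ?thesis unfolding gauss_def by (intro PiM_cong) simp_all
  qed
  finally show ?thesis .
qed

text \<open>
  The translation coupling \<open>x \<mapsto> (x, x + \<theta>' - \<theta>)\<close> moves every point by exactly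
  \<open>\<parallel>\<theta> - \<theta>'\<parallel>\<close>.
\<close>

lemma W1_gauss_le: "W1 p (gauss p \<theta>) (gauss p \<theta>') \<le> ennreal (l2dist p \<theta> \<theta>')"
proof -
  let ?G = "gauss p \<theta>" and ?G' = "gauss p \<theta>'" and ?t = "translate p (\<lambda>i. \<theta>' i - \<theta> i)"
  let ?f = "\<lambda>x. (x, ?t x)"
  define M where "M = distr ?G (?G \<Otimes>\<^sub>M ?G') ?f"
  interpret G: prob_space ?G by (rule prob_space_gauss)
  have t: "?t \<in> ?G \<rightarrow>\<^sub>M ?G'"
    using measurable_translate by (simp add: measurable_cong_sets[OF sets_gauss sets_gauss])
  have f: "?f \<in> ?G \<rightarrow>\<^sub>M ?G \<Otimes>\<^sub>M ?G'"
    by (rule measurable_Pair[OF measurable_ident_sets[OF refl] t])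
  have "M \<in> couplings ?G ?G'"
    unfolding couplings_def
  proof (intro CollectI conjI)
    show "sets M = sets (?G \<Otimes>\<^sub>M ?G')" by (simp add: M_def)
    show "prob_space M" unfolding M_def by (rule G.prob_space_distr[OF f])
    have "distr M ?G fst = distr ?G ?G (\<lambda>x. x)"
      unfolding M_def using f by (subst distr_distr) (auto simp: comp_def)
    then show "distr M ?G fst = ?G" by (simp add: distr_id)
    have "distr M ?G' snd = distr ?G ?G' ?t"
      unfolding M_def using f by (subst distr_distr) (auto simp: comp_def)
    then show "distr M ?G' snd = ?G'" by (simp add: gauss_translate)
  qed
  then have "W1 p ?G ?G' \<le> (\<integral>\<^sup>+ z. ennreal (l2dist p (fst z) (snd z)) \<partial>M)"
    unfolding W1_def by (rule INF_lower)
  also have "\<dots> = (\<integral>\<^sup>+ x. ennreal (l2dist p x (?t x)) \<partial>?G)"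
    unfolding M_def using borel_measurable_l2dist_pair
    by (subst nn_integral_distr[OF f])
      (simp_all add: measurable_cong_sets[OF sets_pair_measure_cong[OF sets_gauss sets_gauss] refl])
  also have "\<dots> = ennreal (l2dist p \<theta> \<theta>')"
    using G.emeasure_space_1 by (simp add: l2dist_translate)
  finally show ?thesis .
qed

lemma gauss_in_adversary:
  assumes "\<theta> \<in> sparse_vecs p k" "l2dist p \<theta> \<theta>' \<le> \<epsilon>"
  shows "(\<theta>, gauss p \<theta>') \<in> adversary p k \<epsilon>"
  using assms W1_gauss_le[of p \<theta> \<theta>'] prob_space_gauss
  by (auto simp: adversary_def intro: order_trans ennreal_leI)

section \<open>The contamination term\<close>

definition worst_error_prob ::
    "nat \<Rightarrow> nat \<Rightarrow> nat \<Rightarrow> real \<Rightarrow> ((nat \<Rightarrow> nat \<Rightarrow> real) \<Rightarrow> (nat \<Rightarrow> real)) \<Rightarrow> real \<Rightarrow> ennreal" where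
  "worst_error_prob p k n \<epsilon> est T = (SUP (\<theta>, P) \<in> adversary p k \<epsilon>.
     emeasure (sample n P) {xs \<in> space (sample n P). T \<le> l2dist p \<theta> (est xs)})"

lemma worst_error_prob_ge_gauss:
  assumes "\<theta> \<in> sparse_vecs p k" "l2dist p \<theta> \<theta>' \<le> \<epsilon>"
  shows "emeasure (sample n (gauss p \<theta>')) {xs \<in> space (sample n (gauss p \<theta>')). T \<le> l2dist p \<theta> (est xs)}
    \<le> worst_error_prob p k n \<epsilon> est T"
  unfolding worst_error_prob_def using gauss_in_adversary[OF assms] by (auto intro!: SUP_upper2)

lemma measurable_estimator:
  "est \<in> estimators p n \<Longrightarrow> est \<in> sample n (gauss p \<theta>) \<rightarrow>\<^sub>M Rp p"
  unfolding estimators_def using measurable_cong_sets[OF sets_sample_gauss refl] by blast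

lemma sets_estimator_error:
  assumes "est \<in> estimators p n"
  shows "{xs \<in> space (sample n (gauss p \<theta>')). t \<le> l2dist p \<theta> (est xs)} \<in> sets (sample n (gauss p \<theta>'))"
    and "{xs \<in> space (sample n (gauss p \<theta>')). l2dist p \<theta> (est xs) < t} \<in> sets (sample n (gauss p \<theta>'))"
  using measurable_estimator[OF assms, of \<theta>'] by measurable

lemma two_point_error_prob:
  assumes "prob_space M" and "2 * T \<le> l2dist p \<theta>\<^sub>0 \<theta>\<^sub>1"
    and "\<And>\<theta>. {x \<in> space M. T \<le> l2dist p \<theta> (est x)} \<in> sets M"
  shows "\<exists>\<theta>\<in>{\<theta>\<^sub>0, \<theta>\<^sub>1}. 1/2 \<le> measure M {x \<in> space M. T \<le> l2dist p \<theta> (est x)}"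
proof -
  interpret prob_space M by fact
  let ?E = "\<lambda>\<theta>. {x \<in> space M. T \<le> l2dist p \<theta> (est x)}"
  have "space M \<subseteq> ?E \<theta>\<^sub>0 \<union> ?E \<theta>\<^sub>1"
  proof
    fix x assume x: "x \<in> space M"
    have "l2dist p \<theta>\<^sub>0 \<theta>\<^sub>1 \<le> l2dist p \<theta>\<^sub>0 (est x) + l2dist p \<theta>\<^sub>1 (est x)"
      using l2dist_triangle[of p \<theta>\<^sub>0 \<theta>\<^sub>1 "est x"] l2dist_commute[of p "est x" \<theta>\<^sub>1] by simp
    then have "T \<le> l2dist p \<theta>\<^sub>0 (est x) \<or> T \<le> l2dist p \<theta>\<^sub>1 (est x)"
      using assms(2) by linarith
    then show "x \<in> ?E \<theta>\<^sub>0 \<union> ?E \<theta>\<^sub>1" using x by auto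
  qed
  then have "1 \<le> prob (?E \<theta>\<^sub>0 \<union> ?E \<theta>\<^sub>1)"
    using assms(3) prob_space by (metis finite_measure_mono sets.Un)
  also have "\<dots> \<le> prob (?E \<theta>\<^sub>0) + prob (?E \<theta>\<^sub>1)"
    using assms(3) by (intro measure_subadditive) (simp_all add: emeasure_eq_measure)
  finally have "1/2 \<le> prob (?E \<theta>\<^sub>0) \<or> 1/2 \<le> prob (?E \<theta>\<^sub>1)" by linarith
  then show ?thesis by blast
qed

lemma worst_error_prob_contamination:
  assumes p: "0 < p" and k: "1 \<le> k" and eps: "0 \<le> \<epsilon>" and T: "T \<le> \<epsilon> / 2"
    and est: "est \<in> estimators p n"
  shows "ennreal (1/2) \<le> worst_error_prob p k n \<epsilon> est T"
proof -
  define \<theta>\<^sub>0 where "\<theta>\<^sub>0 = (\<lambda>i\<in>{..<p}. 0::real)"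
  define \<theta>\<^sub>1 where "\<theta>\<^sub>1 = (\<lambda>i\<in>{..<p}. if i = 0 then \<epsilon> else 0)"
  let ?G = "sample n (gauss p \<theta>\<^sub>1)"
  interpret G: prob_space ?G by (rule prob_space_sample_gauss)
  have "(\<Sum>i<p. (\<theta>\<^sub>0 i - \<theta>\<^sub>1 i)\<^sup>2) = (\<Sum>i<p. if i = 0 then \<epsilon>\<^sup>2 else 0)"
    by (intro sum.cong) (auto simp: \<theta>\<^sub>0_def \<theta>\<^sub>1_def)
  then have dist: "l2dist p \<theta>\<^sub>0 \<theta>\<^sub>1 = \<epsilon>"
    using p eps by (simp add: l2dist_def)
  have "card {i \<in> {..<p}. \<theta>\<^sub>1 i \<noteq> 0} \<le> card {0::nat}"
    by (intro card_mono) (auto simp: \<theta>\<^sub>1_def split: if_splits)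
  then have sparse: "\<theta>\<^sub>0 \<in> sparse_vecs p k" "\<theta>\<^sub>1 \<in> sparse_vecs p k"
    using k by (simp_all add: sparse_vecs_def \<theta>\<^sub>0_def \<theta>\<^sub>1_def Rp_def space_PiM)
  have "2 * T \<le> l2dist p \<theta>\<^sub>0 \<theta>\<^sub>1" using dist T by simp
  then obtain \<theta> where "\<theta> \<in> {\<theta>\<^sub>0, \<theta>\<^sub>1}"
    and half: "1/2 \<le> G.prob {xs \<in> space ?G. T \<le> l2dist p \<theta> (est xs)}"
    using two_point_error_prob[OF G.prob_space_axioms _ sets_estimator_error(1)[OF est]] by blast
  moreover have "l2dist p \<theta> \<theta>\<^sub>1 \<le> \<epsilon>"
    using \<open>\<theta> \<in> {\<theta>\<^sub>0, \<theta>\<^sub>1}\<close> dist eps by (auto simp: l2dist_def)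
  ultimately have "emeasure ?G {xs \<in> space ?G. T \<le> l2dist p \<theta> (est xs)} \<le> worst_error_prob p k n \<epsilon> est T"
    using sparse by (auto intro!: worst_error_prob_ge_gauss)
  moreover have "ennreal (1/2) \<le> emeasure ?G {xs \<in> space ?G. T \<le> l2dist p \<theta> (est xs)}"
    unfolding G.emeasure_eq_measure by (rule ennreal_leI) (rule half)
  ultimately show ?thesis by (rule order_trans[rotated])
qed

section \<open>A block packing of sparse vectors\<close>

definition block_vec :: "nat \<Rightarrow> nat \<Rightarrow> nat \<Rightarrow> real \<Rightarrow> (nat \<Rightarrow> nat) \<Rightarrow> (nat \<Rightarrow> real)" where
  "block_vec p k m \<delta> s = (\<lambda>i\<in>{..<p}. if i < k * m \<and> s (i div m) = i mod m then \<delta> else 0)"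

definition hamming :: "nat \<Rightarrow> (nat \<Rightarrow> 'a) \<Rightarrow> (nat \<Rightarrow> 'a) \<Rightarrow> nat" where
  "hamming k s s' = card {b \<in> {..<k}. s b \<noteq> s' b}"

lemma sum_lessThan_mult_blocks:
  fixes f :: "nat \<Rightarrow> 'a::comm_monoid_add"
  shows "(\<Sum>i<k * m. f i) = (\<Sum>b<k. \<Sum>c<m. f (b * m + c))"
proof -
  have "(\<Sum>i<k * m. f i) = (\<Sum>b<k. sum f {b * m..<b * m + m})"
    by (rule sum.nat_group[symmetric])
  also have "\<dots> = (\<Sum>b<k. \<Sum>c<m. f (b * m + c))"
    using sum.shift_bounds_nat_ivl[of f 0 "b * m" m for b]
    by (simp add: atLeast0LessThan add.commute)
  finally show ?thesis .
qed

lemma block_vec_block: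
  assumes "b < k" "c < m" "k * m \<le> p"
  shows "block_vec p k m \<delta> s (b * m + c) = (if s b = c then \<delta> else 0)"
proof -
  have "b * m + c < Suc b * m" using assms by simp
  also have "\<dots> \<le> k * m" using assms by (intro mult_right_mono) auto
  finally show ?thesis using assms unfolding block_vec_def by auto
qed

lemma sum_block_vec:
  assumes "k * m \<le> p" "g 0 0 = 0"
  shows "(\<Sum>i<p. g (block_vec p k m \<delta> s i) (block_vec p k m \<delta> s' i))
    = (\<Sum>b<k. \<Sum>c<m. g (if s b = c then \<delta> else 0) (if s' b = c then \<delta> else 0))"
proof -
  have "(\<Sum>i<p. g (block_vec p k m \<delta> s i) (block_vec p k m \<delta> s' i))
      = (\<Sum>i<k * m. g (block_vec p k m \<delta> s i) (block_vec p k m \<delta> s' i))"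
    using assms by (intro sum.mono_neutral_right) (auto simp: block_vec_def)
  also have "\<dots> = (\<Sum>b<k. \<Sum>c<m. g (block_vec p k m \<delta> s (b * m + c)) (block_vec p k m \<delta> s' (b * m + c)))"
    by (rule sum_lessThan_mult_blocks)
  also have "\<dots> = (\<Sum>b<k. \<Sum>c<m. g (if s b = c then \<delta> else 0) (if s' b = c then \<delta> else 0))"
    using assms(1) by (intro sum.cong refl) (simp add: block_vec_block)
  finally show ?thesis .
qed

lemma sum_sq_block_vec:
  assumes "k * m \<le> p" "s \<in> PiE {..<k} (\<lambda>_. {..<m})"
  shows "(\<Sum>i<p. (block_vec p k m \<delta> s i)\<^sup>2) = real k * \<delta>\<^sup>2"
proof -
  have "(\<Sum>c<m. (if s b = c then \<delta> else 0)\<^sup>2) = \<delta>\<^sup>2" if "b < k" for b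
  proof -
    have "s b < m" using that assms(2) by (auto simp: PiE_def Pi_def)
    moreover have "(\<Sum>c<m. (if s b = c then \<delta> else 0)\<^sup>2) = (\<Sum>c<m. if c = s b then \<delta>\<^sup>2 else 0)"
      by (intro sum.cong) auto
    ultimately show ?thesis by simp
  qed
  then show ?thesis
    using sum_block_vec[OF assms(1), of "\<lambda>x y. x\<^sup>2"] by simp
qed

lemma sum_sq_diff_block_vec:
  assumes "k * m \<le> p" "s \<in> PiE {..<k} (\<lambda>_. {..<m})" "s' \<in> PiE {..<k} (\<lambda>_. {..<m})"
  shows "(\<Sum>i<p. (block_vec p k m \<delta> s i - block_vec p k m \<delta> s' i)\<^sup>2) = 2 * \<delta>\<^sup>2 * real (hamming k s s')"
proof -
  have block: "(\<Sum>c<m. ((if s b = c then \<delta> else 0) - (if s' b = c then \<delta> else 0))\<^sup>2)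
      = (if s b = s' b then 0 else 2 * \<delta>\<^sup>2)" if "b < k" for b
  proof (cases "s b = s' b")
    case False
    have "s b < m" "s' b < m" using that assms(2,3) by (auto simp: PiE_def Pi_def)
    moreover have "(\<Sum>c<m. ((if s b = c then \<delta> else 0) - (if s' b = c then \<delta> else 0))\<^sup>2)
        = (\<Sum>c<m. (if c = s b then \<delta>\<^sup>2 else 0) + (if c = s' b then \<delta>\<^sup>2 else 0))"
      using False by (intro sum.cong) auto
    ultimately show ?thesis using False by (simp add: sum.distrib)
  qed simp
  have "(\<Sum>b<k. if s b = s' b then 0 else 2 * \<delta>\<^sup>2) = (\<Sum>b\<in>{b \<in> {..<k}. s b \<noteq> s' b}. 2 * \<delta>\<^sup>2)"
    by (rule sum.mono_neutral_cong_right) auto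
  then show ?thesis
    using sum_block_vec[OF assms(1), of "\<lambda>x y. (x - y)\<^sup>2"] block by (simp add: hamming_def)
qed

lemma block_vec_sparse: "0 < m \<Longrightarrow> block_vec p k m \<delta> s \<in> sparse_vecs p k"
proof -
  assume m: "0 < m"
  have "{i \<in> {..<p}. block_vec p k m \<delta> s i \<noteq> 0} \<subseteq> (\<lambda>b. b * m + s b) ` {..<k}"
  proof
    fix i assume "i \<in> {i \<in> {..<p}. block_vec p k m \<delta> s i \<noteq> 0}"
    then have i: "i < k * m" "s (i div m) = i mod m"
      by (auto simp: block_vec_def split: if_splits)
    then have "i div m < k" "i = (i div m) * m + s (i div m)"
      using m by (simp_all add: less_mult_imp_div_less)
    then show "i \<in> (\<lambda>b. b * m + s b) ` {..<k}" by blast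
  qed
  then have "card {i \<in> {..<p}. block_vec p k m \<delta> s i \<noteq> 0} \<le> card ((\<lambda>b. b * m + s b) ` {..<k})"
    by (intro card_mono) simp_all
  also have "\<dots> \<le> k" using card_image_le[of "{..<k}" "\<lambda>b. b * m + s b"] by simp
  finally show ?thesis by (simp add: sparse_vecs_def Rp_def space_PiM block_vec_def)
qed

text \<open>
  Chernoff-type counting: the weight \<open>m\<^bsup>h - hamming k s s\<^sub>0\<^esup>\<close> is at least \<open>1\<close> on the
  Hamming ball, and its sum over all \<open>s\<close> factorises over the blocks.
\<close>

lemma card_hamming_ball_le:
  assumes m: "1 \<le> m" and s\<^sub>0: "s\<^sub>0 \<in> PiE {..<k} (\<lambda>_. {..<m})"
  shows "real (card {s \<in> PiE {..<k} (\<lambda>_. {..<m}). real (hamming k s s\<^sub>0) < h})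
    \<le> real m powr h * (2 - 1 / real m) ^ k"
proof -
  let ?S = "PiE {..<k} (\<lambda>_. {..<m::nat})"
  let ?w = "\<lambda>b c. if c = s\<^sub>0 b then 1 else 1 / real m"
  have weight: "real m powr (h - real (hamming k s s\<^sub>0)) = real m powr h * (\<Prod>b<k. ?w b (s b))" for s
  proof -
    have "(\<Prod>b<k. ?w b (s b)) = (\<Prod>b\<in>{b \<in> {..<k}. s b \<noteq> s\<^sub>0 b}. 1 / real m)"
      by (rule prod.mono_neutral_cong_right) auto
    then show ?thesis
      using m by (simp add: hamming_def powr_diff powr_realpow divide_inverse power_inverse)
  qed
  have block: "(\<Sum>c<m. ?w b c) = 2 - 1 / real m" if "b < k" for b
  proof -
    have "s\<^sub>0 b < m" using that s\<^sub>0 by (auto simp: PiE_def Pi_def)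
    then have "(\<Sum>c<m. ?w b c) = (\<Sum>c<m. (if c = s\<^sub>0 b then 1 - 1 / real m else 0) + 1 / real m)"
      by (intro sum.cong) auto
    also have "\<dots> = 2 - 1 / real m"
      using \<open>s\<^sub>0 b < m\<close> m by (simp add: sum.distrib)
    finally show ?thesis .
  qed
  have "real (card {s \<in> ?S. real (hamming k s s\<^sub>0) < h}) = (\<Sum>s\<in>{s \<in> ?S. real (hamming k s s\<^sub>0) < h}. 1)"
    by simp
  also have "\<dots> \<le> (\<Sum>s\<in>{s \<in> ?S. real (hamming k s s\<^sub>0) < h}. real m powr (h - real (hamming k s s\<^sub>0)))"
    using m by (intro sum_mono ge_one_powr_ge_zero) auto
  also have "\<dots> \<le> (\<Sum>s\<in>?S. real m powr (h - real (hamming k s s\<^sub>0)))"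
    by (intro sum_mono2) (auto simp: finite_PiE)
  also have "\<dots> = real m powr h * (\<Sum>s\<in>?S. \<Prod>b<k. ?w b (s b))"
    unfolding sum_distrib_left by (intro sum.cong refl weight)
  also have "(\<Sum>s\<in>?S. \<Prod>b<k. ?w b (s b)) = (\<Prod>b<k. \<Sum>c<m. ?w b c)"
    by (rule prod_sum_PiE[symmetric]) auto
  also have "\<dots> = (2 - 1 / real m) ^ k"
    by (simp add: block)
  finally show ?thesis by simp
qed

text \<open>Two vectors of the packing within distance \<open>r\<close> of a common point differ in fewer than \<open>k/8\<close> blocks.\<close>

lemma card_block_vecs_in_ball_le:
  assumes km: "k * m \<le> p" and m: "1 \<le> m" and \<delta>: "\<delta> \<noteq> 0" and r: "r\<^sup>2 = real k * \<delta>\<^sup>2 / 16"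
  shows "real (card {s \<in> PiE {..<k} (\<lambda>_. {..<m}). l2dist p (block_vec p k m \<delta> s) y < r})
    \<le> real m powr (real k / 8) * (2 - 1 / real m) ^ k"
proof (cases "{s \<in> PiE {..<k} (\<lambda>_. {..<m}). l2dist p (block_vec p k m \<delta> s) y < r} = {}")
  case True
  have "1 / real m \<le> 2" using m by (simp add: field_simps)
  then have "0 \<le> real m powr (real k / 8) * (2 - 1 / real m) ^ k"
    by (intro mult_nonneg_nonneg zero_le_power) simp_all
  then show ?thesis unfolding True by simp
next
  case False
  let ?S = "PiE {..<k} (\<lambda>_. {..<m})" and ?v = "block_vec p k m \<delta>"
  obtain s\<^sub>0 where s\<^sub>0: "s\<^sub>0 \<in> ?S" "l2dist p (?v s\<^sub>0) y < r" using False by blast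
  have "{s \<in> ?S. l2dist p (?v s) y < r} \<subseteq> {s \<in> ?S. real (hamming k s s\<^sub>0) < real k / 8}"
  proof safe
    fix s assume s: "s \<in> ?S" "l2dist p (?v s) y < r"
    have "l2dist p (?v s) (?v s\<^sub>0) < 2 * r"
      using l2dist_triangle[of p "?v s" "?v s\<^sub>0" y] l2dist_commute[of p y "?v s\<^sub>0"] s s\<^sub>0 by linarith
    moreover have "l2dist p (?v s) (?v s\<^sub>0) = sqrt (2 * \<delta>\<^sup>2 * real (hamming k s s\<^sub>0))"
      using sum_sq_diff_block_vec[OF km s(1) s\<^sub>0(1)] by (simp add: l2dist_def)
    ultimately have "sqrt (2 * \<delta>\<^sup>2 * real (hamming k s s\<^sub>0)) < 2 * r"
      by simp
    also have "2 * r = sqrt ((2 * r)\<^sup>2)"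
      using s(2) l2dist_nonneg[of p "?v s" y] by (simp only: real_sqrt_abs)
    finally have "2 * \<delta>\<^sup>2 * real (hamming k s s\<^sub>0) < (2 * r)\<^sup>2"
      by (simp only: real_sqrt_less_iff)
    also have "\<dots> = 2 * \<delta>\<^sup>2 * (real k / 8)"
      using r by (simp add: power_mult_distrib)
    finally show "real (hamming k s s\<^sub>0) < real k / 8"
      using mult_less_cancel_left_pos[of "2 * \<delta>\<^sup>2"] \<delta> by simp
  qed
  then have "real (card {s \<in> ?S. l2dist p (?v s) y < r}) \<le> real (card {s \<in> ?S. real (hamming k s s\<^sub>0) < real k / 8})"
    by (intro of_nat_mono card_mono) (simp_all add: finite_PiE)
  also have "\<dots> \<le> real m powr (real k / 8) * (2 - 1 / real m) ^ k"
    by (rule card_hamming_ball_le[OF m s\<^sub>0(1)])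
  finally show ?thesis .
qed

lemma packing_ratio_base_le:
  fixes x :: real
  assumes "x = 2 \<or> 3 \<le> x"
  shows "(2 * x - 1) ^ 4 * 25 ^ 4 \<le> 23 ^ 4 * x ^ 7"
  using assms
proof
  assume x: "3 \<le> x"
  have "(2 * x - 1) ^ 4 \<le> (2 * x) ^ 4" using x by (intro power_mono) auto
  then have "(2 * x - 1) ^ 4 \<le> 16 * x ^ 4" by simp
  moreover have "(3::real) ^ 3 * x ^ 4 \<le> x ^ 3 * x ^ 4" using x by (intro mult_right_mono power_mono) auto
  then have "27 * x ^ 4 \<le> x ^ 7" by (simp add: power_add[symmetric])
  moreover have "0 \<le> x ^ 4" using x by simp
  ultimately have "(2 * x - 1) ^ 4 * 390625 \<le> 279841 * x ^ 7" by linarith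
  then show ?thesis by simp
qed simp

lemma packing_ratio_le:
  assumes m: "2 \<le> m" and k: "1 \<le> k"
  shows "real m powr (real k / 4) * (2 - 1 / real m) ^ k / real m ^ k \<le> 23/25"
proof -
  define x where "x = real m"
  define q where "q = x powr (1/4) * (2 - 1 / x) / x"
  have x: "2 \<le> x" "x = 2 \<or> 3 \<le> x" using m unfolding x_def by (cases "m = 2"; simp)+
  have q0: "0 \<le> q" using x by (simp add: q_def field_simps)
  have "q = x powr (1/4) * (2 * x - 1) / x\<^sup>2"
    using x by (simp add: q_def field_simps power2_eq_square)
  then have "q ^ 4 = (x powr (1/4)) ^ 4 * (2 * x - 1) ^ 4 / (x\<^sup>2) ^ 4"
    by (simp add: power_mult_distrib power_divide)
  also have "\<dots> = x * (2 * x - 1) ^ 4 / x ^ 8"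
    using x by (simp add: powr_power power_mult[symmetric])
  also have "\<dots> = (2 * x - 1) ^ 4 / x ^ 7"
    using x by (simp add: eval_nat_numeral)
  also have "\<dots> \<le> (23/25) ^ 4"
    using packing_ratio_base_le[OF x(2)] x by (simp add: field_simps)
  finally have "q \<le> 23/25"
    using power_mono_iff[of q "23/25" 4] q0 by simp
  moreover have "q ^ k \<le> q"
    using power_decreasing[of 1 k q] q0 \<open>q \<le> 23/25\<close> k by simp
  moreover have "real m powr (real k / 4) * (2 - 1 / real m) ^ k / real m ^ k = q ^ k"
    using m by (simp add: q_def x_def power_mult_distrib power_divide powr_power)
  ultimately show ?thesis by linarith
qed

section \<open>The sparsity term\<close>

lemma ennreal_mult_indicator_le_amgm:
  fixes F E :: real
  assumes "0 < E" "0 \<le> F"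
  shows "ennreal F * indicator B x \<le> ennreal (1 / (2 * E)) * ennreal (F\<^sup>2) + ennreal (E / 2) * indicator B x"
proof (cases "x \<in> B")
  case True
  have "2 * E * F \<le> F\<^sup>2 + E\<^sup>2"
    using sum_squares_ge_zero[of "F - E" 0] by (simp add: power2_eq_square algebra_simps)
  then have "F \<le> F\<^sup>2 / (2 * E) + E / 2"
    using assms by (simp add: field_simps power2_eq_square)
  then have "ennreal F \<le> ennreal (F\<^sup>2 / (2 * E) + E / 2)"
    by (rule ennreal_leI)
  also have "\<dots> = ennreal (F\<^sup>2 / (2 * E)) + ennreal (E / 2)"
    using assms by (intro ennreal_plus) auto
  also have "ennreal (F\<^sup>2 / (2 * E)) = ennreal (1 / (2 * E)) * ennreal (F\<^sup>2)"
    using assms by (subst ennreal_mult[symmetric]) auto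
  finally show ?thesis using True by simp
qed simp

text \<open>
  This replaces Fano's inequality: integrate \<open>F \<cdot> 1\<^sub>B \<le> F\<^sup>2 / (2E) + E 1\<^sub>B / 2\<close> and
  average over \<open>s\<close>.
\<close>

lemma ex_density_mass_le_overlap:
  fixes S :: "'s set" and F :: "'s \<Rightarrow> 'a \<Rightarrow> real" and B :: "'s \<Rightarrow> 'a set"
  assumes fin: "finite S" and ne: "S \<noteq> {}" and Q: "prob_space Q"
    and F: "\<And>s. s \<in> S \<Longrightarrow> F s \<in> borel_measurable Q" "\<And>s x. 0 \<le> F s x"
    and moment: "\<And>s. s \<in> S \<Longrightarrow> (\<integral>\<^sup>+x. ennreal ((F s x)\<^sup>2) \<partial>Q) \<le> ennreal E" and E: "0 < E"
    and B: "\<And>s. s \<in> S \<Longrightarrow> B s \<in> sets Q"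
    and overlap: "\<And>x. x \<in> space Q \<Longrightarrow> real (card {s \<in> S. x \<in> B s}) \<le> N"
  shows "\<exists>s\<in>S. emeasure (density Q (\<lambda>x. ennreal (F s x))) (B s) \<le> ennreal (1/2 + N * E / (2 * real (card S)))"
proof -
  interpret Q: prob_space Q by fact
  define b where "b s = 1/2 + E / 2 * Q.prob (B s)" for s
  have mass_le: "emeasure (density Q (\<lambda>x. ennreal (F s x))) (B s) \<le> ennreal (b s)" if s: "s \<in> S" for s
  proof -
    note [measurable] = F(1)[OF s] B[OF s]
    have "emeasure (density Q (\<lambda>x. ennreal (F s x))) (B s) = (\<integral>\<^sup>+x. ennreal (F s x) * indicator (B s) x \<partial>Q)"
      by (rule emeasure_density) auto
    also have "\<dots> \<le> (\<integral>\<^sup>+x. ennreal (1 / (2 * E)) * ennreal ((F s x)\<^sup>2) + ennreal (E / 2) * indicator (B s) x \<partial>Q)"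
      by (intro nn_integral_mono ennreal_mult_indicator_le_amgm E F(2))
    also have "\<dots> = ennreal (1 / (2 * E)) * (\<integral>\<^sup>+x. ennreal ((F s x)\<^sup>2) \<partial>Q) + ennreal (E / 2) * emeasure Q (B s)"
      by (subst nn_integral_add) (auto simp: nn_integral_cmult nn_integral_cmult_indicator)
    also have "\<dots> \<le> ennreal (1 / (2 * E)) * ennreal E + ennreal (E / 2) * emeasure Q (B s)"
      by (intro add_mono mult_left_mono moment[OF s]) auto
    also have "\<dots> = ennreal (b s)"
      using E by (simp add: b_def Q.emeasure_eq_measure ennreal_mult[symmetric] ennreal_plus[symmetric])
    finally show ?thesis .
  qed
  have N: "0 \<le> N"
    using overlap[of "SOME x. x \<in> space Q"] Q.not_empty some_in_eq of_nat_0_le_iff order_trans by metis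
  have "(\<Sum>s\<in>S. emeasure Q (B s)) = (\<integral>\<^sup>+x. (\<Sum>s\<in>S. indicator (B s) x) \<partial>Q)"
    using B by (subst nn_integral_sum) auto
  also have "\<dots> \<le> (\<integral>\<^sup>+x. ennreal N \<partial>Q)"
  proof (rule nn_integral_mono)
    fix x assume x: "x \<in> space Q"
    have "(\<Sum>s\<in>S. indicator (B s) x :: ennreal) = (\<Sum>s\<in>{s \<in> S. x \<in> B s}. 1)"
      using fin by (intro sum.mono_neutral_cong_right) (auto simp: indicator_def)
    also have "\<dots> = ennreal (real (card {s \<in> S. x \<in> B s}))"
      by (simp add: ennreal_of_nat_eq_real_of_nat)
    also have "\<dots> \<le> ennreal N"
      using overlap[OF x] by (rule ennreal_leI)
    finally show "(\<Sum>s\<in>S. indicator (B s) x :: ennreal) \<le> ennreal N" .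
  qed
  finally have "(\<Sum>s\<in>S. Q.prob (B s)) \<le> N"
    using N by (simp add: Q.emeasure_eq_measure Q.prob_space sum_ennreal ennreal_le_iff)
  then have sum_b: "(\<Sum>s\<in>S. b s) \<le> real (card S) / 2 + E / 2 * N"
    using E unfolding b_def sum.distrib sum_distrib_left[symmetric] by simp
  have "Min (b ` S) \<in> b ` S" using fin ne by simp
  then obtain s where s: "s \<in> S" "Min (b ` S) = b s" by blast
  then have "real (card S) * b s \<le> (\<Sum>s\<in>S. b s)"
    using fin by (intro sum_bounded_below) (auto simp flip: s(2) intro: Min_le)
  with sum_b have "b s \<le> 1/2 + N * E / (2 * real (card S))"
    using fin ne by (simp add: field_simps card_gt_0_iff)
  then show ?thesis
    using s(1) mass_le[OF s(1)] by (blast intro: order_trans ennreal_leI)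
qed

lemma ln_div_le_twice_ln_div_nat:
  assumes k: "0 < k" and kp: "2 * k < p"
  shows "ln (real p / real k) \<le> 2 * ln (real (p div k))"
proof -
  define m where "m = p div k"
  have m: "2 \<le> m" unfolding m_def using div_le_mono[of "2 * k" p k] k kp by simp
  have "p < (m + 1) * k"
    unfolding m_def using k by (metis add.commute div_mult_mod_eq mod_less_divisor mult.commute mult_Suc
      nat_add_left_cancel_less Suc_eq_plus1)
  then have "real p < (real m + 1) * real k" by (metis of_nat_1 of_nat_add of_nat_less_iff of_nat_mult)
  also have "\<dots> \<le> (real m)\<^sup>2 * real k"
  proof -
    have "2 * real m \<le> real m * real m" using m by (intro mult_right_mono) auto
    then have "real m + 1 \<le> (real m)\<^sup>2" using m unfolding power2_eq_square by linarith
    then show ?thesis by (intro mult_right_mono) simp_all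
  qed
  finally have "real p / real k \<le> (real m)\<^sup>2" using k by (simp add: field_simps)
  then have "ln (real p / real k) \<le> ln ((real m)\<^sup>2)"
    using k kp m by (subst ln_le_cancel_iff) auto
  then show ?thesis using m by (simp add: ln_realpow m_def)
qed

lemma ex_block_vec_ball_prob_le:
  assumes m: "2 \<le> m" and km: "k * m \<le> p" and n: "1 \<le> n" and est: "est \<in> estimators p n"
  defines "\<delta> \<equiv> sqrt (ln (real m) / (8 * real n))"
    and "r \<equiv> sqrt (real k * ln (real m) / (128 * real n))"
  shows "\<exists>s \<in> PiE {..<k} (\<lambda>_. {..<m}). measure (sample n (gauss p (block_vec p k m \<delta> s)))
      {xs \<in> space (sample n (gauss p (block_vec p k m \<delta> s))). l2dist p (block_vec p k m \<delta> s) (est xs) < r}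
    \<le> 1/2 + real m powr (real k / 4) * (2 - 1 / real m) ^ k / (2 * real m ^ k)"
proof -
  let ?S = "PiE {..<k} (\<lambda>_. {..<m})" and ?\<theta> = "block_vec p k m \<delta>" and ?Q = "sample n (gauss p (\<lambda>_. 0))"
  define B where "B s = {xs \<in> space ?Q. l2dist p (?\<theta> s) (est xs) < r}" for s
  define E where "E = real m powr (real k / 8)"
  define N where "N = real m powr (real k / 8) * (2 - 1 / real m) ^ k"
  have lnm: "0 < ln (real m)" using m by simp
  have \<delta>: "\<delta>\<^sup>2 = ln (real m) / (8 * real n)" "\<delta> \<noteq> 0"
    using lnm n by (simp_all add: \<delta>_def)
  have r: "r\<^sup>2 = real k * \<delta>\<^sup>2 / 16"
    using lnm n by (simp add: r_def \<delta> field_simps)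
  have moment: "exp (real n * (\<Sum>j<p. (?\<theta> s j)\<^sup>2)) = E" if "s \<in> ?S" for s
    using sum_sq_block_vec[OF km that] lnm n m by (simp add: \<delta> E_def powr_def field_simps)
  have "\<exists>s\<in>?S. emeasure (density ?Q (\<lambda>x. ennreal (sample_lr n p (?\<theta> s) x))) (B s)
      \<le> ennreal (1/2 + N * E / (2 * real (card ?S)))"
  proof (rule ex_density_mass_le_overlap)
    show "real (card {s \<in> ?S. x \<in> B s}) \<le> N" if "x \<in> space ?Q" for x
      using card_block_vecs_in_ball_le[OF km _ \<delta>(2) r, of "est x"] that m by (simp add: B_def N_def)
    show "B s \<in> sets ?Q" for s
      using sets_estimator_error(2)[OF est] by (simp add: B_def)
  qed (use m moment in \<open>auto simp: finite_PiE PiE_eq_empty_iff lessThan_empty_iff prob_space_sample_gauss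
    sample_lr_nonneg nn_integral_sample_lr_sq E_def\<close>)
  then obtain s where s: "s \<in> ?S" and small: "emeasure (density ?Q (\<lambda>x. ennreal (sample_lr n p (?\<theta> s) x))) (B s)
      \<le> ennreal (1/2 + N * E / (2 * real (card ?S)))"
    by blast
  interpret P: prob_space "sample n (gauss p (?\<theta> s))" by (rule prob_space_sample_gauss)
  have NE: "N * E / (2 * real (card ?S)) = real m powr (real k / 4) * (2 - 1 / real m) ^ k / (2 * real m ^ k)"
    unfolding N_def E_def by (simp add: card_PiE mult_ac flip: powr_add)
  have "ennreal (P.prob (B s)) \<le> ennreal (1/2 + N * E / (2 * real (card ?S)))"
    using small by (simp add: sample_gauss_eq_density[symmetric] P.emeasure_eq_measure)
  moreover have "0 \<le> 1/2 + N * E / (2 * real (card ?S))"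
    unfolding NE using m by (intro add_nonneg_nonneg divide_nonneg_nonneg mult_nonneg_nonneg zero_le_power)
      (simp_all add: field_simps)
  ultimately have "P.prob (B s) \<le> 1/2 + N * E / (2 * real (card ?S))"
    by (simp only: ennreal_le_iff)
  moreover have "B s = {xs \<in> space (sample n (gauss p (?\<theta> s))). l2dist p (?\<theta> s) (est xs) < r}"
    by (simp add: B_def space_sample_gauss)
  ultimately show ?thesis
    using s unfolding NE by auto
qed

lemma ex_block_vec_error_prob_ge:
  assumes m: "2 \<le> m" and km: "k * m \<le> p" and k: "1 \<le> k" and n: "1 \<le> n"
    and est: "est \<in> estimators p n"
  defines "\<delta> \<equiv> sqrt (ln (real m) / (8 * real n))"
    and "r \<equiv> sqrt (real k * ln (real m) / (128 * real n))"
  shows "\<exists>s \<in> PiE {..<k} (\<lambda>_. {..<m}). ennreal (1/25) \<le> emeasure (sample n (gauss p (block_vec p k m \<delta> s)))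
    {xs \<in> space (sample n (gauss p (block_vec p k m \<delta> s))). r \<le> l2dist p (block_vec p k m \<delta> s) (est xs)}"
proof -
  let ?\<theta> = "block_vec p k m \<delta>"
  define \<rho> where "\<rho> = real m powr (real k / 4) * (2 - 1 / real m) ^ k / real m ^ k"
  obtain s where s: "s \<in> PiE {..<k} (\<lambda>_. {..<m})" and ball: "measure (sample n (gauss p (?\<theta> s)))
      {xs \<in> space (sample n (gauss p (?\<theta> s))). l2dist p (?\<theta> s) (est xs) < r} \<le> 1/2 + \<rho> / 2"
    using ex_block_vec_ball_prob_le[OF m km n est] unfolding \<delta>_def r_def \<rho>_def by auto
  let ?P = "sample n (gauss p (?\<theta> s))"
  let ?B = "{xs \<in> space ?P. l2dist p (?\<theta> s) (est xs) < r}"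
  interpret P: prob_space ?P by (rule prob_space_sample_gauss)
  have "P.prob ?B \<le> 24/25"
    using ball packing_ratio_le[OF m k, folded \<rho>_def] by linarith
  moreover have "?B \<in> P.events"
    by (rule sets_estimator_error(2)[OF est])
  ultimately have "1/25 \<le> P.prob (space ?P - ?B)"
    by (simp add: P.prob_compl)
  also have "space ?P - ?B = {xs \<in> space ?P. r \<le> l2dist p (?\<theta> s) (est xs)}"
    by auto
  finally have "ennreal (1/25) \<le> emeasure ?P {xs \<in> space ?P. r \<le> l2dist p (?\<theta> s) (est xs)}"
    unfolding P.emeasure_eq_measure by (rule ennreal_leI)
  then show ?thesis using s by blast
qed

lemma worst_error_prob_sparse:
  assumes k: "1 \<le> k" and kp: "real k < real p / 2" and n: "1 \<le> n" and eps: "0 \<le> \<epsilon>"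
    and T: "T \<le> sqrt (real k * ln (real p / real k) / real n) / 16"
    and est: "est \<in> estimators p n"
  shows "ennreal (1/25) \<le> worst_error_prob p k n \<epsilon> est T"
proof -
  define m where "m = p div k"
  define \<delta> where "\<delta> = sqrt (ln (real m) / (8 * real n))"
  define r where "r = sqrt (real k * ln (real m) / (128 * real n))"
  have kp': "2 * k < p" using kp by linarith
  have m: "2 \<le> m" unfolding m_def using div_le_mono[of "2 * k" p k] k kp' by simp
  have km: "k * m \<le> p" unfolding m_def by (simp add: mult.commute)
  have "sqrt (256::real) = 16" by (rule real_sqrt_unique) simp_all
  then have sqrt_div_256: "sqrt (x / 256) = sqrt x / 16" for x :: real
    by (simp add: real_sqrt_divide)
  have "T \<le> sqrt (real k * ln (real p / real k) / real n / 256)"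
    unfolding sqrt_div_256 by (rule T)
  also have "\<dots> \<le> sqrt (real k * (2 * ln (real m)) / real n / 256)"
    using ln_div_le_twice_ln_div_nat[of k p] k kp'
    by (intro real_sqrt_le_mono divide_right_mono mult_left_mono) (simp_all add: m_def)
  also have "\<dots> = r"
    unfolding r_def by (simp add: field_simps)
  finally have Tr: "T \<le> r" .
  obtain s where "ennreal (1/25) \<le> emeasure (sample n (gauss p (block_vec p k m \<delta> s)))
      {xs \<in> space (sample n (gauss p (block_vec p k m \<delta> s))). r \<le> l2dist p (block_vec p k m \<delta> s) (est xs)}"
    using ex_block_vec_error_prob_ge[OF m km k n est] unfolding \<delta>_def r_def by blast
  also have "\<dots> \<le> emeasure (sample n (gauss p (block_vec p k m \<delta> s)))
      {xs \<in> space (sample n (gauss p (block_vec p k m \<delta> s))). T \<le> l2dist p (block_vec p k m \<delta> s) (est xs)}"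
    using Tr sets_estimator_error(1)[OF est] by (intro emeasure_mono) auto
  also have "\<dots> \<le> worst_error_prob p k n \<epsilon> est T"
    using m eps by (intro worst_error_prob_ge_gauss block_vec_sparse) (simp_all add: l2dist_def)
  finally show ?thesis .
qed

theorem theorem7:
  shows "\<exists>C>0. \<exists>c>0. \<forall>(p::nat) (k::nat) (n::nat) (\<epsilon>::real).
    1 \<le> k \<longrightarrow> real k < real p / 2 \<longrightarrow> 1 \<le> n \<longrightarrow> 0 \<le> \<epsilon> \<longrightarrow>
    (INF est \<in> estimators p n. SUP (\<theta>, P) \<in> adversary p k \<epsilon>.
       emeasure (sample n P)
         {xs \<in> space (sample n P).
            l2dist p \<theta> (est xs) \<ge> C * max (sqrt (real k * ln (real p / real k) / real n)) \<epsilon>})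
    \<ge> ennreal c"
proof -
  have bound: "ennreal (1/25)
      \<le> worst_error_prob p k n \<epsilon> est (1/16 * max (sqrt (real k * ln (real p / real k) / real n)) \<epsilon>)"
    if "1 \<le> k" "real k < real p / 2" "1 \<le> n" "0 \<le> \<epsilon>" "est \<in> estimators p n" for p k n \<epsilon> est
  proof (cases "sqrt (real k * ln (real p / real k) / real n) \<le> \<epsilon>")
    case True
    then have "ennreal (1/2)
        \<le> worst_error_prob p k n \<epsilon> est (1/16 * max (sqrt (real k * ln (real p / real k) / real n)) \<epsilon>)"
      using that by (intro worst_error_prob_contamination) simp_all
    then show ?thesis by (rule order_trans[rotated]) (intro ennreal_leI, simp)
  next
    case False
    then show ?thesis using that by (intro worst_error_prob_sparse) simp_all
  qed
  show ?thesis
    unfolding worst_error_prob_def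
    by (intro exI[of _ "1/16"] exI[of _ "1/25"] conjI allI impI INF_greatest bound[unfolded worst_error_prob_def])
      simp_all
qed

end
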